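(* Let $(M,g)$ be a Hessian manifold. Then all Pontryagin forms of $(M,g)$ vanish identically.
   Context: A Riemannian metric $g$ on $M$ is Hessian if around each point there are local coordinates $x_1,\dots,x_n$ and a function $\phi$ with $g_{ij} = \partial^2\phi/\partial x_i\partial x_j$. For a connection on a complex vector bundle with curvature matrix of $2$-forms $\Omega$ (in a local frame) and an invariant polynomial $P$, $P(\Omega)$ is a well-defined closed form. Let $P_k$ be the invariant polynomial given by the coefficient of $t^k$ in $\det(I+tX)$. The Pontryagin forms of $(M,g)$ are the forms $P_{2k}(\Omega)$, $k\ge 1$, where $\Omega$ is the curvature of the Levi-Civita connection extended to the complexified tangent bundle $TM\otimes\mathbb{C}$; they are the closed forms, polynomial in the curvature, representing (up to constant factors) the Pontryagin classes $p_k(M) = (-1)^k c_{2k}(TM\otimes\mathbb{C})$. *)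

theory Defs
  imports "HOL-Analysis.Analysis"
begin

text \<open>Local-coordinate differential geometry on an open set U of real^'n.
  Coordinates are indexed by the finite type 'n; the coordinate vector fields
  are the standard basis vectors (axis i 1).\<close>

definition pd :: "'n::finite \<Rightarrow> (real^'n \<Rightarrow> real) \<Rightarrow> real^'n \<Rightarrow> real" where
  "pd i f x = deriv (\<lambda>t. f (x + t *\<^sub>R axis i 1)) 0"

fun pds :: "'n::finite list \<Rightarrow> (real^'n \<Rightarrow> real) \<Rightarrow> real^'n \<Rightarrow> real" where
  "pds [] f = f"
| "pds (i # is) f = pd i (pds is f)"

definition smooth_on :: "(real^'n::finite) set \<Rightarrow> (real^'n \<Rightarrow> real) \<Rightarrow> bool" where
  "smooth_on U f \<longleftrightarrow> (\<forall>is. pds is f differentiable_on U)"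

definition hessian :: "(real^'n::finite \<Rightarrow> real) \<Rightarrow> 'n \<Rightarrow> 'n \<Rightarrow> real^'n \<Rightarrow> real" where
  "hessian \<phi> i j = pd i (pd j \<phi>)"

definition pos_def_metric_on ::
    "(real^'n::finite) set \<Rightarrow> ('n \<Rightarrow> 'n \<Rightarrow> real^'n \<Rightarrow> real) \<Rightarrow> bool" where
  "pos_def_metric_on U g \<longleftrightarrow>
     (\<forall>x\<in>U. (\<forall>i j. g i j x = g j i x) \<and>
        (\<forall>v::real^'n. v \<noteq> 0 \<longrightarrow> (\<Sum>i\<in>UNIV. \<Sum>j\<in>UNIV. g i j x * v$i * v$j) > 0))"

definition metric_inv :: "('n::finite \<Rightarrow> 'n \<Rightarrow> real^'n \<Rightarrow> real) \<Rightarrow> real^'n \<Rightarrow> 'n \<Rightarrow> 'n \<Rightarrow> real" where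
  "metric_inv g x k l = matrix_inv (\<chi> i j. g i j x) $ k $ l"

text \<open>Christoffel symbols Gamma^k_{ij} of the Levi-Civita connection,
  nabla_{d_i} d_j = sum_k Gamma^k_{ij} d_k.\<close>
definition christoffel :: "('n::finite \<Rightarrow> 'n \<Rightarrow> real^'n \<Rightarrow> real) \<Rightarrow> 'n \<Rightarrow> 'n \<Rightarrow> 'n \<Rightarrow> real^'n \<Rightarrow> real" where
  "christoffel g k i j x =
     (1/2) * (\<Sum>l\<in>UNIV. metric_inv g x k l *
                 (pd i (g j l) x + pd j (g i l) x - pd l (g i j) x))"

text \<open>Components R^i_{jkl} of the curvature in the coordinate frame: with the
  connection matrix omega^i_j = sum_k Gamma^i_{kj} dx^k, the curvature matrix
  Omega = d omega + omega wedge omega satisfies Omega^i_j(d_k, d_l) = R^i_{jkl}.\<close>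
definition curv :: "('n::finite \<Rightarrow> 'n \<Rightarrow> real^'n \<Rightarrow> real) \<Rightarrow> 'n \<Rightarrow> 'n \<Rightarrow> 'n \<Rightarrow> 'n \<Rightarrow> real^'n \<Rightarrow> real" where
  "curv g i j k l x =
     pd k (christoffel g i l j) x - pd l (christoffel g i k j) x
     + (\<Sum>m\<in>UNIV. christoffel g i k m x * christoffel g m l j x
                 - christoffel g i l m x * christoffel g m k j x)"

definition curv_form :: "('n::finite \<Rightarrow> 'n \<Rightarrow> real^'n \<Rightarrow> real) \<Rightarrow> real^'n \<Rightarrow> 'n \<Rightarrow> 'n \<Rightarrow> real^'n \<Rightarrow> real^'n \<Rightarrow> real" where
  "curv_form g x i j u w = (\<Sum>k\<in>UNIV. \<Sum>l\<in>UNIV. curv g i j k l x * u$k * w$l)"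

definition wedge2 :: "(real^'n::finite \<Rightarrow> real^'n \<Rightarrow> real) list \<Rightarrow> (nat \<Rightarrow> real^'n) \<Rightarrow> real" where
  "wedge2 bs v =
     (1 / 2 ^ length bs) *
     (\<Sum>\<sigma>\<in>{\<sigma>. \<sigma> permutes {..<2 * length bs}}.
        of_int (sign \<sigma>) * (\<Prod>a<length bs. (bs ! a) (v (\<sigma> (2*a))) (v (\<sigma> (2*a+1)))))"

text \<open>P_k(Omega): coefficient of t^k in det(I + t Omega), i.e. the sum of the
  principal k-minors of Omega, computed in the commutative algebra of even forms.
  The principal minor on an index set I is
  sum_{pi permutes I} sgn pi wedge_{i in I} Omega^i_{pi i}; we sum over all
  k! enumerations of I (distinct lists) and divide by k!.\<close>
definition inv_poly_P :: "nat \<Rightarrow> ('n::finite \<Rightarrow> 'n \<Rightarrow> real^'n \<Rightarrow> real^'n \<Rightarrow> real) \<Rightarrow> (nat \<Rightarrow> real^'n) \<Rightarrow> real" where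
  "inv_poly_P k \<Omega> v =
     (1 / fact k) *
     (\<Sum>is\<in>{is::'n list. distinct is \<and> length is = k}.
        \<Sum>\<pi>\<in>{\<pi>. \<pi> permutes set is}.
          of_int (sign \<pi>) * wedge2 (map (\<lambda>i. \<Omega> i (\<pi> i)) is) v)"

definition pontryagin_form :: "('n::finite \<Rightarrow> 'n \<Rightarrow> real^'n \<Rightarrow> real) \<Rightarrow> nat \<Rightarrow> real^'n \<Rightarrow> (nat \<Rightarrow> real^'n) \<Rightarrow> real" where
  "pontryagin_form g k x v = inv_poly_P (2 * k) (curv_form g x) v"

end

theory Submission
  imports Defs "HOL-Combinatorics.Cycles"
begin

text \<open>For \<open>g = \<nabla>\<^sup>2\<phi>\<close> the Christoffel symbols are \<open>\<Gamma> = \<onehalf> g\<^sup>-\<^sup>1 \<partial>\<^sup>3\<phi>\<close>, with totally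
  symmetric lower indices. In \<open>d\<omega>\<close> the fourth derivatives of \<open>\<phi>\<close> cancel by symmetry of mixed
  partials, and differentiating \<open>g\<^sup>-\<^sup>1\<close> leaves \<open>d\<omega> = -2 \<omega> \<and> \<omega>\<close>, so the curvature matrix is
  \<open>\<Omega> = -\<omega> \<and> \<omega>\<close>. For such a square of a matrix of 1-forms every \<open>P\<^sub>k(\<Omega>)\<close>, \<open>k \<ge> 1\<close>, vanishes:
  expanding the principal minors and the wedge products turns \<open>P\<^sub>k(\<Omega>)\<close> into alternating sums,
  over the orderings \<open>\<sigma>\<close> of the tangent vectors, of products of traces
  \<open>tr (\<omega> (v (\<sigma> s)) \<omega> (v (\<sigma> (\<rho> s))) \<cdots>)\<close> along the cycles of a permutation \<open>\<rho>\<close> whose cycles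
  have even length. Rotating \<open>\<sigma>\<close> along such a cycle is an odd permutation that leaves the traces
  unchanged, so each alternating sum cancels.\<close>

section \<open>Alternating sums over permutations\<close>

lemma sign_cycle_of_list:
  "distinct cs \<Longrightarrow> cs \<noteq> [] \<Longrightarrow> sign (cycle_of_list cs) = (-1) ^ (length cs - 1)"
proof (induction cs rule: cycle_of_list.induct)
  case (1 i j cs)
  have "sign (cycle_of_list (i # j # cs)) = sign (Transposition.transpose i j) * sign (cycle_of_list (j # cs))"
    by (simp add: sign_compose permutation_swap_id permutation_of_cycle)
  also have "\<dots> = - ((-1) ^ (length (j # cs) - 1))"
    using 1 by (simp add: sign_swap_id)
  finally have sign_eq: "sign (cycle_of_list (i # j # cs)) = - ((-1) ^ (length (j # cs) - 1))" .
  show ?case by (subst sign_eq) simp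
qed simp_all

lemma cycle_of_support_commute:
  assumes "permutation \<rho>"
  shows "cycle_of_list (support \<rho> a) \<circ> \<rho> = \<rho> \<circ> cycle_of_list (support \<rho> a)"
proof
  fix x
  let ?S = "set (support \<rho> a)" and ?c = "cycle_of_list (support \<rho> a)"
  have inj: "inj \<rho>"
    using assms permutation_bijective bij_is_inj by blast
  have "\<rho> ((\<rho> ^^ i) a) = (\<rho> ^^ Suc i) a" for i
    by simp
  then have "\<rho> ` ?S \<subseteq> ?S"
    unfolding support_set[OF assms] by blast
  then have invariant: "\<rho> ` ?S = ?S"
    by (rule endo_inj_surj[OF finite_set _ inj_on_subset[OF inj subset_UNIV]])
  show "(?c \<circ> \<rho>) x = (\<rho> \<circ> ?c) x"
  proof (cases "x \<in> ?S")
    case True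
    then have "\<rho> x \<in> ?S" using invariant by blast
    then have "?c (\<rho> x) = \<rho> (\<rho> x)"
      by (rule cycle_restrict[OF assms, symmetric])
    moreover have "?c x = \<rho> x"
      using True by (rule cycle_restrict[OF assms, symmetric])
    ultimately show ?thesis by simp
  next
    case False
    have "\<rho> x \<notin> ?S"
    proof
      assume "\<rho> x \<in> ?S"
      then obtain y where "y \<in> ?S" "\<rho> x = \<rho> y" using invariant by blast
      then show False using False injD[OF inj] by metis
    qed
    then show ?thesis
      using False by (simp add: id_outside_supp)
  qed
qed

text \<open>The cycle of \<open>\<rho>\<close> through \<open>0\<close> has even length because \<open>\<rho>\<close> alternates
  parity, so it is an odd permutation commuting with \<open>\<rho>\<close>.\<close>
lemma obtain_odd_perm_commuting:
  fixes \<rho> :: "nat \<Rightarrow> nat"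
  assumes \<rho>: "\<rho> permutes {..<N}" and alternating: "\<forall>s<N. odd (\<rho> s + s)" and "0 < N"
  obtains c where "c permutes {..<N}" "c \<circ> \<rho> = \<rho> \<circ> c" "sign c = -1"
proof -
  have perm: "permutation \<rho>"
    using \<rho> permutation_permutes by blast
  have orbit: "(\<rho> ^^ n) 0 < N \<and> even ((\<rho> ^^ n) 0 + n)" for n
  proof (induction n)
    case (Suc n)
    let ?y = "(\<rho> ^^ n) 0"
    have "\<rho> ?y < N"
      using Suc permutes_in_image[OF \<rho>, of ?y] by simp
    moreover have "odd (\<rho> ?y + ?y)"
      using alternating Suc by blast
    ultimately show ?case
      using Suc by auto
  qed (use \<open>0 < N\<close> in simp)
  define c where "c = cycle_of_list (support \<rho> 0)"
  define L where "L = least_power \<rho> 0"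
  have L: "(\<rho> ^^ L) 0 = 0" "L > 0"
    using least_power_of_permutation[OF perm] by (auto simp: L_def)
  then have "even L"
    using orbit[of L] by simp
  with L have "odd (L - 1)" "support \<rho> 0 \<noteq> []"
    by (auto simp: L_def)
  then have "sign c = -1"
    using sign_cycle_of_list[OF cycle_of_permutation[OF perm]] by (simp add: c_def L_def)
  moreover have "set (support \<rho> 0) \<subseteq> {..<N}"
    using orbit by auto
  then have "c permutes {..<N}"
    unfolding c_def using permutes_subset[OF cycle_permutes] by blast
  moreover have "c \<circ> \<rho> = \<rho> \<circ> c"
    unfolding c_def by (rule cycle_of_support_commute[OF perm])
  ultimately show ?thesis
    using that by blast
qed

lemma sum_sign_compose_odd:
  assumes "finite S" and c: "c permutes S" and "sign c = -1"
  shows "(\<Sum>\<sigma>\<in>{\<sigma>. \<sigma> permutes S}. of_int (sign \<sigma>) * H (\<sigma> \<circ> c))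
       = - (\<Sum>\<sigma>\<in>{\<sigma>. \<sigma> permutes S}. of_int (sign \<sigma>) * H \<sigma>)"
proof -
  have "sign (\<sigma> \<circ> c) = - sign \<sigma>" if "\<sigma> permutes S" for \<sigma>
  proof -
    have "permutation \<sigma>" "permutation c"
      using that c \<open>finite S\<close> permutation_permutes by blast+
    then show ?thesis
      using \<open>sign c = -1\<close> by (simp add: sign_compose)
  qed
  then have "(\<Sum>\<sigma>\<in>{\<sigma>. \<sigma> permutes S}. of_int (sign \<sigma>) * H \<sigma>)
      = (\<Sum>\<sigma>\<in>{\<sigma>. \<sigma> permutes S}. - (of_int (sign \<sigma>) * H (\<sigma> \<circ> c)))"
    by (subst sum_permutations_compose_right[OF c]) (intro sum.cong refl, simp)
  then show ?thesis
    by (simp add: sum_negf)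
qed

text \<open>For a permutation \<open>\<rho>\<close> of \<open>{..<N}\<close> this is the product, over the cycles
  \<open>(s, \<rho> s, \<rho>\<^sup>2 s, \<dots>)\<close> of \<open>\<rho>\<close>, of the traces \<open>tr (X (\<sigma> s) X (\<sigma> (\<rho> s)) \<cdots>)\<close>.\<close>
definition cycle_trace ::
    "(nat \<Rightarrow> 'n::finite \<Rightarrow> 'n \<Rightarrow> real) \<Rightarrow> nat \<Rightarrow> (nat \<Rightarrow> nat) \<Rightarrow> (nat \<Rightarrow> nat) \<Rightarrow> real" where
  "cycle_trace X N \<sigma> \<rho> = (\<Sum>j\<in>{..<N} \<rightarrow>\<^sub>E UNIV. \<Prod>s<N. X (\<sigma> s) (j s) (j (\<rho> s)))"

lemma cycle_trace_compose_commuting: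
  fixes X :: "nat \<Rightarrow> 'n::finite \<Rightarrow> 'n \<Rightarrow> real"
  assumes c: "c permutes {..<N}" and r: "\<rho> permutes {..<N}" and comm: "c \<circ> \<rho> = \<rho> \<circ> c"
  shows "cycle_trace X N (\<sigma> \<circ> c) \<rho> = cycle_trace X N \<sigma> \<rho>"
proof -
  \<comment> \<open>Reindex the sum by \<open>j \<mapsto> j \<circ> c\<^sup>-\<^sup>1\<close>: the factors of each cycle trace are only rotated.\<close>
  let ?A = "{..<N} \<rightarrow>\<^sub>E (UNIV::'n set)"
  define c' where "c' = inv c"
  have c': "c' permutes {..<N}" using c permutes_inv c'_def by blast
  have c'_inverse: "c (c' x) = x" "c' (c x) = x" for x
    using c c'_def permutes_inverses by fastforce+
  have \<rho>_c': "\<rho> (c' t) = c' (\<rho> t)" for t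
  proof -
    have "c (\<rho> (c' t)) = \<rho> t" using comm c'_inverse by (metis comp_apply)
    then show ?thesis by (metis c'_inverse(2))
  qed
  have c_less: "c x < N \<longleftrightarrow> x < N" "c' x < N \<longleftrightarrow> x < N" for x
    using permutes_in_image[OF c, of x] permutes_in_image[OF c', of x] by auto
  define T where "T j = restrict (j \<circ> c') {..<N}" for j :: "nat \<Rightarrow> 'n"
  have bij: "bij_betw T ?A ?A"
  proof (rule bij_betw_byWitness[where f' = "\<lambda>j. restrict (j \<circ> c) {..<N}"])
    show "\<forall>a\<in>?A. restrict (T a \<circ> c) {..<N} = a"
      using c_less c'_inverse by (auto simp: T_def fun_eq_iff PiE_def extensional_def)
    show "\<forall>a'\<in>?A. T (restrict (a' \<circ> c) {..<N}) = a'"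
      using c_less c'_inverse by (auto simp: T_def fun_eq_iff PiE_def extensional_def)
    show "T ` ?A \<subseteq> ?A" by (auto simp: T_def)
    show "(\<lambda>j. restrict (j \<circ> c) {..<N}) ` ?A \<subseteq> ?A" by auto
  qed
  have "cycle_trace X N (\<sigma> \<circ> c) \<rho> = (\<Sum>j\<in>?A. \<Prod>s<N. X (\<sigma> (c s)) (j s) (j (\<rho> s)))"
    by (simp add: cycle_trace_def)
  also have "\<dots> = (\<Sum>j\<in>?A. \<Prod>t<N. X (\<sigma> t) (T j t) (T j (\<rho> t)))"
  proof (rule sum.cong[OF refl])
    fix j
    have "(\<Prod>s<N. X (\<sigma> (c s)) (j s) (j (\<rho> s))) = (\<Prod>t<N. X (\<sigma> (c (c' t))) (j (c' t)) (j (\<rho> (c' t))))"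
      by (rule prod.reindex_bij_betw[symmetric]) (use c' permutes_imp_bij in blast)
    also have "\<dots> = (\<Prod>t<N. X (\<sigma> t) (T j t) (T j (\<rho> t)))"
      using permutes_in_image[OF r] by (intro prod.cong refl) (auto simp: T_def c'_inverse \<rho>_c')
    finally show "(\<Prod>s<N. X (\<sigma> (c s)) (j s) (j (\<rho> s))) = (\<Prod>t<N. X (\<sigma> t) (T j t) (T j (\<rho> t)))" .
  qed
  also have "\<dots> = cycle_trace X N \<sigma> \<rho>"
    unfolding cycle_trace_def by (rule sum.reindex_bij_betw[OF bij])
  finally show ?thesis .
qed

lemma sum_sign_cycle_trace_eq_0:
  fixes X :: "nat \<Rightarrow> 'n::finite \<Rightarrow> 'n \<Rightarrow> real"
  assumes c: "c permutes {..<N}" and \<rho>: "\<rho> permutes {..<N}" and "c \<circ> \<rho> = \<rho> \<circ> c" and "sign c = -1"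
  shows "(\<Sum>\<sigma>\<in>{\<sigma>. \<sigma> permutes {..<N}}. of_int (sign \<sigma>) * cycle_trace X N \<sigma> \<rho>) = 0"
proof -
  have "(\<Sum>\<sigma>\<in>{\<sigma>. \<sigma> permutes {..<N}}. of_int (sign \<sigma>) * cycle_trace X N \<sigma> \<rho>)
      = - (\<Sum>\<sigma>\<in>{\<sigma>. \<sigma> permutes {..<N}}. of_int (sign \<sigma>) * cycle_trace X N \<sigma> \<rho>)"
    using sum_sign_compose_odd[OF finite_lessThan c \<open>sign c = -1\<close>, of "\<lambda>\<sigma>. cycle_trace X N \<sigma> \<rho>"]
    by (simp add: cycle_trace_compose_commuting[OF c \<rho> \<open>c \<circ> \<rho> = \<rho> \<circ> c\<close>])
  then show ?thesis
    by linarith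
qed

text \<open>The positions \<open>0, \<dots>, 2p - 1\<close> come in pairs \<open>(2a, 2a + 1)\<close>, one for each factor
  \<open>\<omega> \<and> \<omega>\<close> of a wedge product; the pair \<open>a\<close> is followed by the pair \<open>\<tau> a\<close>.\<close>
definition pair_chain :: "nat \<Rightarrow> (nat \<Rightarrow> nat) \<Rightarrow> nat \<Rightarrow> nat" where
  "pair_chain p \<tau> s = (if s < 2*p then (if even s then s + 1 else 2 * \<tau> (s div 2)) else s)"

lemma pair_chain_permutes:
  assumes t: "\<tau> permutes {..<p}"
  shows "pair_chain p \<tau> permutes {..<2*p}"
proof -
  have \<tau>_less: "\<tau> a < p \<longleftrightarrow> a < p" for a
    using permutes_in_image[OF t, of a] by auto
  have \<tau>_inj: "\<tau> a = \<tau> b \<Longrightarrow> a = b" for a b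
    using permutes_inj[OF t] by (meson injD)
  have into: "pair_chain p \<tau> s < 2*p" if "s < 2*p" for s
    using that \<tau>_less[of "s div 2"] by (auto simp: pair_chain_def)
  have inj: "inj_on (pair_chain p \<tau>) {..<2*p}"
  proof (rule inj_onI)
    fix s s' assume s: "s \<in> {..<2*p}" and s': "s' \<in> {..<2*p}" and e: "pair_chain p \<tau> s = pair_chain p \<tau> s'"
    show "s = s'"
    proof (cases "even s")
      case True
      then show ?thesis using s s' e by (auto simp: pair_chain_def split: if_splits) presburger
    next
      case False
      then have o': "odd s'" using s s' e by (auto simp: pair_chain_def split: if_splits) presburger
      then have "\<tau> (s div 2) = \<tau> (s' div 2)" using False s s' e by (auto simp: pair_chain_def)
      then have "s div 2 = s' div 2" by (rule \<tau>_inj)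
      then show ?thesis using False o' by presburger
    qed
  qed
  have img: "pair_chain p \<tau> ` {..<2*p} = {..<2*p}"
    by (rule endo_inj_surj) (use inj into in auto)
  show ?thesis
  proof (rule bij_imp_permutes)
    show "bij_betw (pair_chain p \<tau>) {..<2*p} {..<2*p}"
      using inj img by (simp add: bij_betw_def)
  qed (simp add: pair_chain_def)
qed

lemma pair_chain_alternating: "\<forall>s<2*p. odd (pair_chain p \<tau> s + s)"
  by (auto simp: pair_chain_def)

lemma prod_lessThan_double: "(\<Prod>s<2*(p::nat). f s) = (\<Prod>a<p. f (2*a) * f (2*a+1))"
proof (induction p)
  case (Suc p)
  have "{..<2 * Suc p} = insert (Suc (2*p)) (insert (2*p) {..<2*p})" by auto
  then show ?case using Suc by (simp add: ac_simps)
qed simp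

lemma bij_betw_interleave:
  fixes p :: nat
  shows "bij_betw (\<lambda>(i, b). restrict (\<lambda>s. if even s then i (s div 2) else b (s div 2)) {..<2*p})
     (({..<p} \<rightarrow>\<^sub>E A) \<times> ({..<p} \<rightarrow>\<^sub>E A)) ({..<2*p} \<rightarrow>\<^sub>E A)"
proof (rule bij_betw_byWitness[where f' = "\<lambda>j. (restrict (\<lambda>a. j (2*a)) {..<p}, restrict (\<lambda>a. j (2*a+1)) {..<p})"])
  show "\<forall>j\<in>{..<2*p} \<rightarrow>\<^sub>E A. (\<lambda>(i, b). restrict (\<lambda>s. if even s then i (s div 2) else b (s div 2)) {..<2*p})
      (restrict (\<lambda>a. j (2*a)) {..<p}, restrict (\<lambda>a. j (2*a+1)) {..<p}) = j"
    by (auto simp: fun_eq_iff PiE_def extensional_def)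
qed (auto simp: fun_eq_iff PiE_def extensional_def Pi_iff div_less_iff_less_mult)

lemma sum_prod_eq_cycle_trace_pair_chain:
  fixes X :: "nat \<Rightarrow> 'n::finite \<Rightarrow> 'n \<Rightarrow> real"
  assumes \<tau>: "\<tau> permutes {..<p}"
  shows "(\<Sum>i\<in>{..<p} \<rightarrow>\<^sub>E UNIV. \<Prod>a<p. \<Sum>b\<in>UNIV. X (\<sigma> (2*a)) (i a) b * X (\<sigma> (2*a+1)) b (i (\<tau> a)))
     = cycle_trace X (2*p) \<sigma> (pair_chain p \<tau>)"
proof -
  let ?A = "{..<p} \<rightarrow>\<^sub>E (UNIV::'n set)"
  define J where "J = (\<lambda>(i::nat \<Rightarrow> 'n, b). restrict (\<lambda>s. if even s then i (s div 2) else b (s div 2)) {..<2*p})"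
  have "(\<Sum>i\<in>?A. \<Prod>a<p. \<Sum>b\<in>UNIV. X (\<sigma> (2*a)) (i a) b * X (\<sigma> (2*a+1)) b (i (\<tau> a)))
      = (\<Sum>i\<in>?A. \<Sum>b\<in>?A. \<Prod>a<p. X (\<sigma> (2*a)) (i a) (b a) * X (\<sigma> (2*a+1)) (b a) (i (\<tau> a)))"
    by (intro sum.cong refl prod_sum_PiE) auto
  also have "\<dots> = (\<Sum>(i, b)\<in>?A \<times> ?A. \<Prod>a<p. X (\<sigma> (2*a)) (i a) (b a) * X (\<sigma> (2*a+1)) (b a) (i (\<tau> a)))"
    by (rule sum.cartesian_product)
  also have "\<dots> = (\<Sum>ib\<in>?A \<times> ?A. \<Prod>s<2*p. X (\<sigma> s) (J ib s) (J ib (pair_chain p \<tau> s)))"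
  proof (rule sum.cong[OF refl], clarify)
    fix i b :: "nat \<Rightarrow> 'n"
    have "\<tau> a < p" if "a < p" for a
      using permutes_in_image[OF \<tau>] that by simp
    then show "(\<Prod>a<p. X (\<sigma> (2*a)) (i a) (b a) * X (\<sigma> (2*a+1)) (b a) (i (\<tau> a)))
        = (\<Prod>s<2*p. X (\<sigma> s) (J (i, b) s) (J (i, b) (pair_chain p \<tau> s)))"
      unfolding prod_lessThan_double by (intro prod.cong refl) (auto simp: J_def pair_chain_def)
  qed
  also have "\<dots> = cycle_trace X (2*p) \<sigma> (pair_chain p \<tau>)"
    unfolding cycle_trace_def J_def by (rule sum.reindex_bij_betw[OF bij_betw_interleave])
  finally show ?thesis .
qed

lemma sum_sign_prod_eq_0_if_not_inj:
  fixes M :: "nat \<Rightarrow> 'n \<Rightarrow> 'n \<Rightarrow> real"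
  assumes ab: "a < p" "b < p" "a \<noteq> b" "i a = i b"
  shows "(\<Sum>\<tau>\<in>{\<tau>. \<tau> permutes {..<p}}. of_int (sign \<tau>) * (\<Prod>c<p. M c (i c) (i (\<tau> c)))) = 0"
proof -
  let ?P = "{\<tau>. \<tau> permutes {..<p}}"
  let ?t = "Transposition.transpose a b"
  have t: "?t permutes {..<p}" using ab by (intro permutes_swap_id) auto
  have it: "i (?t x) = i x" for x using ab by (auto simp: Transposition.transpose_def)
  have "(\<Sum>\<tau>\<in>?P. of_int (sign \<tau>) * (\<Prod>c<p. M c (i c) (i (\<tau> c))))
      = (\<Sum>\<tau>\<in>?P. of_int (sign (?t \<circ> \<tau>)) * (\<Prod>c<p. M c (i c) (i ((?t \<circ> \<tau>) c))))"
    by (rule setum_permutations_compose_left[OF t])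
  also have "\<dots> = (\<Sum>\<tau>\<in>?P. - (of_int (sign \<tau>) * (\<Prod>c<p. M c (i c) (i (\<tau> c)))))"
  proof (rule sum.cong[OF refl])
    fix \<tau> assume "\<tau> \<in> ?P"
    then have "permutation \<tau>" using permutation_permutes by blast
    then have "sign (?t \<circ> \<tau>) = - sign \<tau>"
      using ab by (simp add: sign_compose permutation_swap_id sign_swap_id)
    then show "of_int (sign (?t \<circ> \<tau>)) * (\<Prod>c<p. M c (i c) (i ((?t \<circ> \<tau>) c))) =
        - (of_int (sign \<tau>) * (\<Prod>c<p. M c (i c) (i (\<tau> c))))" by (simp add: it)
  qed
  finally show ?thesis by (simp add: sum_negf)
qed

lemma sum_permutes_image_reindex:
  fixes M :: "nat \<Rightarrow> 'n \<Rightarrow> 'n \<Rightarrow> real"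
  assumes inj: "inj_on i {..<p}"
  shows "(\<Sum>\<pi>\<in>{\<pi>. \<pi> permutes set (map i [0..<p])}. of_int (sign \<pi>) * (\<Prod>a<p. M a (map i [0..<p] ! a) (\<pi> (map i [0..<p] ! a))))
    = (\<Sum>\<tau>\<in>{\<tau>. \<tau> permutes {..<p}}. of_int (sign \<tau>) * (\<Prod>a<p. M a (i a) (i (\<tau> a))))"
proof -
  have setis: "set (map i [0..<p]) = i ` {..<p}" by auto
  have bi: "bij_betw i {..<p} (i ` {..<p})" using inj by (simp add: bij_betw_def)
  have mp: "map_permutation {..<p} i \<tau> = (\<lambda>x. if x \<in> i ` {..<p} then i (\<tau> (inv_into {..<p} i x)) else x)" for \<tau>
    by (simp add: map_permutation_def restrict_id_def fun_eq_iff)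
  have bij: "bij_betw (map_permutation {..<p} i) {\<tau>. \<tau> permutes {..<p}} {\<pi>. \<pi> permutes i ` {..<p}}"
    unfolding mp using bij_betw_permutations[OF bi] by simp
  have "(\<Sum>\<pi>\<in>{\<pi>. \<pi> permutes set (map i [0..<p])}. of_int (sign \<pi>) * (\<Prod>a<p. M a (map i [0..<p] ! a) (\<pi> (map i [0..<p] ! a))))
     = (\<Sum>\<pi>\<in>{\<pi>. \<pi> permutes i ` {..<p}}. of_int (sign \<pi>) * (\<Prod>a<p. M a (i a) (\<pi> (i a))))"
    unfolding setis by (intro sum.cong refl prod.cong) auto
  also have "\<dots> = (\<Sum>\<tau>\<in>{\<tau>. \<tau> permutes {..<p}}. of_int (sign (map_permutation {..<p} i \<tau>)) *
        (\<Prod>a<p. M a (i a) (map_permutation {..<p} i \<tau> (i a))))"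
    by (rule sum.reindex_bij_betw[OF bij, symmetric])
  also have "\<dots> = (\<Sum>\<tau>\<in>{\<tau>. \<tau> permutes {..<p}}. of_int (sign \<tau>) * (\<Prod>a<p. M a (i a) (i (\<tau> a))))"
  proof (rule sum.cong[OF refl])
    fix \<tau> assume t: "\<tau> \<in> {\<tau>. \<tau> permutes {..<p}}"
    have "sign (map_permutation {..<p} i \<tau>) = sign \<tau>"
      using t inj by (intro sign_map_permutation) auto
    moreover have "map_permutation {..<p} i \<tau> (i a) = i (\<tau> a)" if "a < p" for a
      using that inj by (simp add: mp)
    ultimately show "of_int (sign (map_permutation {..<p} i \<tau>)) * (\<Prod>a<p. M a (i a) (map_permutation {..<p} i \<tau> (i a)))
       = of_int (sign \<tau>) * (\<Prod>a<p. M a (i a) (i (\<tau> a)))" by simp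
  qed
  finally show ?thesis .
qed

lemma bij_betw_map_upt_distinct:
  "bij_betw (\<lambda>i. map i [0..<p]) {i\<in>{..<p} \<rightarrow>\<^sub>E UNIV. inj_on i {..<p}} {xs. distinct xs \<and> length xs = p}"
  (is "bij_betw _ ?I ?D")
proof (rule bij_betw_byWitness[where f' = "\<lambda>xs. restrict (\<lambda>a. xs ! a) {..<p}"])
  show "\<forall>i\<in>?I. restrict (\<lambda>a. map i [0..<p] ! a) {..<p} = i"
    by (auto simp: fun_eq_iff PiE_def extensional_def)
  show "\<forall>xs\<in>?D. map (restrict (\<lambda>a. xs ! a) {..<p}) [0..<p] = xs"
    by (auto intro: nth_equalityI)
  show "(\<lambda>i. map i [0..<p]) ` ?I \<subseteq> ?D"
    by (auto simp: distinct_map inj_on_def)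
  show "(\<lambda>xs. restrict (\<lambda>a. xs ! a) {..<p}) ` ?D \<subseteq> ?I"
  proof (intro image_subsetI)
    fix xs assume "xs \<in> ?D"
    then have "inj_on (restrict (\<lambda>a. xs ! a) {..<p}) {..<p}"
      by (auto simp: inj_on_def nth_eq_iff_index_eq)
    then show "restrict (\<lambda>a. xs ! a) {..<p} \<in> ?I"
      by simp
  qed
qed

lemma sum_distinct_lists_eq_sum_PiE:
  fixes M :: "nat \<Rightarrow> 'n::finite \<Rightarrow> 'n \<Rightarrow> real"
  shows "(\<Sum>xs\<in>{xs::'n list. distinct xs \<and> length xs = p}. \<Sum>\<pi>\<in>{\<pi>. \<pi> permutes set xs}.
            of_int (sign \<pi>) * (\<Prod>a<p. M a (xs!a) (\<pi> (xs!a))))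
       = (\<Sum>i\<in>{..<p} \<rightarrow>\<^sub>E (UNIV::'n set). \<Sum>\<tau>\<in>{\<tau>. \<tau> permutes {..<p}}.
            of_int (sign \<tau>) * (\<Prod>a<p. M a (i a) (i (\<tau> a))))"
proof -
  let ?A = "{..<p} \<rightarrow>\<^sub>E (UNIV::'n set)"
  let ?I1 = "{i\<in>?A. inj_on i {..<p}}"
  let ?D = "{xs::'n list. distinct xs \<and> length xs = p}"
  define F where "F i = (\<Sum>\<tau>\<in>{\<tau>. \<tau> permutes {..<p}}. of_int (sign \<tau>) * (\<Prod>a<p. M a (i a) (i (\<tau> a))))" for i
  define G where "G xs = (\<Sum>\<pi>\<in>{\<pi>. \<pi> permutes set xs}. of_int (sign \<pi>) * (\<Prod>a<p. M a (xs!a) (\<pi> (xs!a))))" for xs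
  have z: "F i = 0" if "\<not> inj_on i {..<p}" for i
  proof -
    from that obtain a b where "a < p" "b < p" "a \<noteq> b" "i a = i b"
      by (auto simp: inj_on_def)
    then show ?thesis unfolding F_def by (rule sum_sign_prod_eq_0_if_not_inj)
  qed
  have s1: "(\<Sum>i\<in>?A. F i) = (\<Sum>i\<in>?I1. F i)"
    by (rule sum.mono_neutral_right) (auto intro: finite_PiE z)
  have "(\<Sum>xs\<in>?D. G xs) = (\<Sum>i\<in>?I1. G (map i [0..<p]))"
    by (rule sum.reindex_bij_betw[OF bij_betw_map_upt_distinct, symmetric])
  also have "\<dots> = (\<Sum>i\<in>?I1. F i)"
    unfolding G_def F_def by (intro sum.cong refl sum_permutes_image_reindex) auto
  finally show ?thesis using s1 unfolding F_def G_def by simp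
qed

lemma sum_distinct_lists_eq_sum_cycle_trace:
  fixes X :: "nat \<Rightarrow> 'n::finite \<Rightarrow> 'n \<Rightarrow> real"
  shows "(\<Sum>xs\<in>{xs::'n list. distinct xs \<and> length xs = p}. \<Sum>\<pi>\<in>{\<pi>. \<pi> permutes set xs}.
        of_int (sign \<pi>) * (\<Prod>a<p. \<Sum>b\<in>UNIV. X (\<sigma> (2*a)) (xs!a) b * X (\<sigma> (2*a+1)) b (\<pi> (xs!a))))
      = (\<Sum>\<tau>\<in>{\<tau>. \<tau> permutes {..<p}}. of_int (sign \<tau>) * cycle_trace X (2*p) \<sigma> (pair_chain p \<tau>))"
proof -
  let ?T = "{\<tau>. \<tau> permutes {..<p}}" and ?A = "{..<p} \<rightarrow>\<^sub>E (UNIV::'n set)"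
  have "(\<Sum>xs\<in>{xs::'n list. distinct xs \<and> length xs = p}. \<Sum>\<pi>\<in>{\<pi>. \<pi> permutes set xs}.
      of_int (sign \<pi>) * (\<Prod>a<p. \<Sum>b\<in>UNIV. X (\<sigma> (2*a)) (xs!a) b * X (\<sigma> (2*a+1)) b (\<pi> (xs!a))))
    = (\<Sum>i\<in>?A. \<Sum>\<tau>\<in>?T. of_int (sign \<tau>) * (\<Prod>a<p. \<Sum>b\<in>UNIV. X (\<sigma> (2*a)) (i a) b * X (\<sigma> (2*a+1)) b (i (\<tau> a))))"
    by (rule sum_distinct_lists_eq_sum_PiE[where M = "\<lambda>a x y. \<Sum>b\<in>UNIV. X (\<sigma> (2*a)) x b * X (\<sigma> (2*a+1)) b y"])
  also have "\<dots> = (\<Sum>\<tau>\<in>?T. of_int (sign \<tau>) * (\<Sum>i\<in>?A. \<Prod>a<p. \<Sum>b\<in>UNIV. X (\<sigma> (2*a)) (i a) b * X (\<sigma> (2*a+1)) b (i (\<tau> a))))"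
    by (subst sum.swap) (simp add: sum_distrib_left)
  also have "\<dots> = (\<Sum>\<tau>\<in>?T. of_int (sign \<tau>) * cycle_trace X (2*p) \<sigma> (pair_chain p \<tau>))"
    by (intro sum.cong refl arg_cong2[where f="(*)"] sum_prod_eq_cycle_trace_pair_chain) auto
  finally show ?thesis .
qed

lemma sum_sign_matrix_products_eq_0:
  fixes X :: "nat \<Rightarrow> 'n::finite \<Rightarrow> 'n \<Rightarrow> real"
  assumes p: "0 < p"
  shows "(\<Sum>\<sigma>\<in>{\<sigma>. \<sigma> permutes {..<2*p}}. of_int (sign \<sigma>) *
     (\<Sum>xs\<in>{xs::'n list. distinct xs \<and> length xs = p}. \<Sum>\<pi>\<in>{\<pi>. \<pi> permutes set xs}.
        of_int (sign \<pi>) * (\<Prod>a<p. \<Sum>b\<in>UNIV. X (\<sigma> (2*a)) (xs!a) b * X (\<sigma> (2*a+1)) b (\<pi> (xs!a))))) = 0"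
proof -
  let ?P = "{\<sigma>. \<sigma> permutes {..<2*p}}"
  let ?T = "{\<tau>. \<tau> permutes {..<p}}"
  have "(\<Sum>\<sigma>\<in>?P. of_int (sign \<sigma>) * (\<Sum>\<tau>\<in>?T. of_int (sign \<tau>) * cycle_trace X (2*p) \<sigma> (pair_chain p \<tau>)))
      = (\<Sum>\<tau>\<in>?T. of_int (sign \<tau>) * (\<Sum>\<sigma>\<in>?P. of_int (sign \<sigma>) * cycle_trace X (2*p) \<sigma> (pair_chain p \<tau>)))"
    unfolding sum_distrib_left by (subst sum.swap) (simp add: mult.left_commute)
  also have "\<dots> = 0"
  proof (rule sum.neutral, rule ballI)
    fix \<tau> assume "\<tau> \<in> ?T"
    then have \<rho>: "pair_chain p \<tau> permutes {..<2*p}"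
      by (simp add: pair_chain_permutes)
    obtain c where c: "c permutes {..<2*p}" "c \<circ> pair_chain p \<tau> = pair_chain p \<tau> \<circ> c" "sign c = -1"
      using obtain_odd_perm_commuting[OF \<rho> pair_chain_alternating] p by auto
    show "of_int (sign \<tau>) * (\<Sum>\<sigma>\<in>?P. of_int (sign \<sigma>) * cycle_trace X (2*p) \<sigma> (pair_chain p \<tau>)) = 0"
      using sum_sign_cycle_trace_eq_0[OF c(1) \<rho> c(2,3)] by simp
  qed
  finally show ?thesis
    unfolding sum_distinct_lists_eq_sum_cycle_trace .
qed

section \<open>Invariant polynomials of a square of 1-forms\<close>

text \<open>Antisymmetrizing the factor of the pair \<open>e\<close> doubles the alternating sum: the
  antisymmetric part is the term at \<open>\<sigma> \<circ> (2e 2e+1)\<close>, which carries the opposite sign.\<close>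
lemma sum_sign_prod_antisymmetrize_step:
  fixes f :: "nat \<Rightarrow> nat \<Rightarrow> nat \<Rightarrow> real"
  defines "g \<equiv> \<lambda>E a \<sigma>. if a \<in> E then f a (\<sigma> (2*a)) (\<sigma> (2*a+1)) - f a (\<sigma> (2*a+1)) (\<sigma> (2*a)) else f a (\<sigma> (2*a)) (\<sigma> (2*a+1))"
  assumes e: "e < p" "e \<notin> E"
  shows "(\<Sum>\<sigma>\<in>{\<sigma>. \<sigma> permutes {..<2*p}}. of_int (sign \<sigma>) * (\<Prod>a<p. g (insert e E) a \<sigma>))
       = 2 * (\<Sum>\<sigma>\<in>{\<sigma>. \<sigma> permutes {..<2*p}}. of_int (sign \<sigma>) * (\<Prod>a<p. g E a \<sigma>))"
proof -
  let ?P = "{\<sigma>. \<sigma> permutes {..<2*p}}"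
  let ?t = "Transposition.transpose (2*e) (2*e+1)"
  have t: "?t permutes {..<2*p}" using e by (intro permutes_swap_id) auto
  define R where "R \<sigma> = (\<Prod>a\<in>{..<p} - {e}. g E a \<sigma>)" for \<sigma>
  define F where "F \<sigma> = f e (\<sigma> (2*e)) (\<sigma> (2*e+1))" for \<sigma> :: "nat \<Rightarrow> nat"
  define G where "G \<sigma> = f e (\<sigma> (2*e+1)) (\<sigma> (2*e))" for \<sigma> :: "nat \<Rightarrow> nat"
  have p1: "(\<Prod>a<p. g (insert e E) a \<sigma>) = (F \<sigma> - G \<sigma>) * R \<sigma>" for \<sigma>
  proof -
    have "(\<Prod>a<p. g (insert e E) a \<sigma>) = g (insert e E) e \<sigma> * (\<Prod>a\<in>{..<p} - {e}. g (insert e E) a \<sigma>)"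
      using e by (intro prod.remove) auto
    also have "(\<Prod>a\<in>{..<p} - {e}. g (insert e E) a \<sigma>) = R \<sigma>"
      unfolding R_def g_def by (intro prod.cong) auto
    finally show ?thesis by (simp add: g_def F_def G_def)
  qed
  have p2: "(\<Prod>a<p. g E a \<sigma>) = F \<sigma> * R \<sigma>" for \<sigma>
  proof -
    have "(\<Prod>a<p. g E a \<sigma>) = g E e \<sigma> * R \<sigma>"
      unfolding R_def using e by (intro prod.remove) auto
    then show ?thesis using e by (simp add: g_def F_def)
  qed
  have Rt: "R (\<sigma> \<circ> ?t) = R \<sigma>" for \<sigma>
  proof -
    have "g E a (\<sigma> \<circ> ?t) = g E a \<sigma>" if "a \<noteq> e" for a
    proof -
      have "?t (2*a) = 2*a" "?t (2*a+1) = 2*a+1" using that by (auto simp: Transposition.transpose_def)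
      then show ?thesis by (simp add: g_def)
    qed
    then show ?thesis unfolding R_def by (intro prod.cong) auto
  qed
  have "sign ?t = -1"
    by (simp add: sign_swap_id)
  moreover have "F (\<sigma> \<circ> ?t) = G \<sigma>" for \<sigma>
    by (simp add: F_def G_def)
  ultimately have sG: "(\<Sum>\<sigma>\<in>?P. of_int (sign \<sigma>) * (G \<sigma> * R \<sigma>)) = - (\<Sum>\<sigma>\<in>?P. of_int (sign \<sigma>) * (F \<sigma> * R \<sigma>))"
    using sum_sign_compose_odd[OF finite_lessThan t, of "\<lambda>\<sigma>. F \<sigma> * R \<sigma>"] by (simp only: Rt o_apply)
  have "(\<Sum>\<sigma>\<in>?P. of_int (sign \<sigma>) * (\<Prod>a<p. g (insert e E) a \<sigma>))
     = (\<Sum>\<sigma>\<in>?P. of_int (sign \<sigma>) * (F \<sigma> * R \<sigma>)) - (\<Sum>\<sigma>\<in>?P. of_int (sign \<sigma>) * (G \<sigma> * R \<sigma>))"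
    by (simp add: p1 sum_subtractf[symmetric] algebra_simps)
  also have "\<dots> = 2 * (\<Sum>\<sigma>\<in>?P. of_int (sign \<sigma>) * (F \<sigma> * R \<sigma>))" using sG by simp
  finally show ?thesis by (simp add: p2)
qed

lemma sum_sign_prod_antisymmetrize:
  fixes f :: "nat \<Rightarrow> nat \<Rightarrow> nat \<Rightarrow> real"
  shows "(\<Sum>\<sigma>\<in>{\<sigma>. \<sigma> permutes {..<2*p}}. of_int (sign \<sigma>) *
            (\<Prod>a<p. f a (\<sigma> (2*a)) (\<sigma> (2*a+1)) - f a (\<sigma> (2*a+1)) (\<sigma> (2*a))))
       = 2 ^ p * (\<Sum>\<sigma>\<in>{\<sigma>. \<sigma> permutes {..<2*p}}. of_int (sign \<sigma>) * (\<Prod>a<p. f a (\<sigma> (2*a)) (\<sigma> (2*a+1))))"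
proof -
  define g where "g = (\<lambda>E a \<sigma>. if a \<in> E then f a (\<sigma> (2*a)) (\<sigma> (2*a+1)) - f a (\<sigma> (2*a+1)) (\<sigma> (2*a)) else f a (\<sigma> (2*a)) (\<sigma> (2*a+1)))"
  define T where "T E = (\<Sum>\<sigma>\<in>{\<sigma>. \<sigma> permutes {..<2*p}}. of_int (sign \<sigma>) * (\<Prod>a<p. g E a \<sigma>))" for E
  have main: "E \<subseteq> {..<p} \<Longrightarrow> T E = 2 ^ card E * T {}" for E
  proof (induction E rule: infinite_finite_induct)
    case (infinite A)
    then show ?case using finite_subset by blast
  next
    case empty
    then show ?case by simp
  next
    case (insert e E)
    have "T (insert e E) = 2 * T E"
      unfolding T_def g_def using insert by (intro sum_sign_prod_antisymmetrize_step) auto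
    then show ?case using insert by simp
  qed
  have "T {..<p} = 2 ^ p * T {}" using main[of "{..<p}"] by simp
  then show ?thesis by (simp add: T_def g_def)
qed

lemma wedge2_antisymmetric:
  assumes "\<And>a u w. a < length bs \<Longrightarrow> (bs ! a) u w = c * (F a u w - F a w u)"
  shows "wedge2 bs v = c ^ length bs * (\<Sum>\<sigma>\<in>{\<sigma>. \<sigma> permutes {..<2 * length bs}}.
           of_int (sign \<sigma>) * (\<Prod>a<length bs. F a (v (\<sigma> (2*a))) (v (\<sigma> (2*a+1)))))"
proof -
  let ?p = "length bs" and ?P = "{\<sigma>. \<sigma> permutes {..<2 * length bs}}"
  define f where "f a x y = F a (v x) (v y)" for a x y
  have "wedge2 bs v = (1 / 2 ^ ?p) * (\<Sum>\<sigma>\<in>?P. of_int (sign \<sigma>) *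
      (\<Prod>a<?p. c * (f a (\<sigma> (2*a)) (\<sigma> (2*a+1)) - f a (\<sigma> (2*a+1)) (\<sigma> (2*a)))))"
    unfolding wedge2_def f_def using assms by simp
  also have "\<dots> = (1 / 2 ^ ?p) * c ^ ?p * (\<Sum>\<sigma>\<in>?P. of_int (sign \<sigma>) *
      (\<Prod>a<?p. f a (\<sigma> (2*a)) (\<sigma> (2*a+1)) - f a (\<sigma> (2*a+1)) (\<sigma> (2*a))))"
    by (simp add: prod.distrib sum_distrib_left mult_ac)
  also have "\<dots> = c ^ ?p * (\<Sum>\<sigma>\<in>?P. of_int (sign \<sigma>) * (\<Prod>a<?p. f a (\<sigma> (2*a)) (\<sigma> (2*a+1))))"
    by (simp only: sum_sign_prod_antisymmetrize) simp
  finally show ?thesis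
    by (simp add: f_def)
qed

text \<open>The hypothesis says \<open>\<Omega> = c \<cdot> B \<and> B\<close> for the matrix \<open>B\<close> of 1-forms.\<close>
lemma inv_poly_P_square_eq_0:
  fixes \<Omega> :: "'n::finite \<Rightarrow> 'n \<Rightarrow> real^'n \<Rightarrow> real^'n \<Rightarrow> real" and B :: "real^'n \<Rightarrow> 'n \<Rightarrow> 'n \<Rightarrow> real"
  assumes \<Omega>: "\<And>i j u w. \<Omega> i j u w = c * (\<Sum>b\<in>UNIV. B u i b * B w b j - B w i b * B u b j)"
    and "0 < p"
  shows "inv_poly_P p \<Omega> v = 0"
proof -
  let ?P = "{\<sigma>. \<sigma> permutes {..<2*p}}" and ?D = "{xs::'n list. distinct xs \<and> length xs = p}"
  define W where "W xs \<pi> \<sigma> =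
    (\<Prod>a<p. \<Sum>b\<in>UNIV. B (v (\<sigma> (2*a))) (xs!a) b * B (v (\<sigma> (2*a+1))) b (\<pi> (xs!a)))"
    for xs :: "'n list" and \<pi> :: "'n \<Rightarrow> 'n" and \<sigma> :: "nat \<Rightarrow> nat"
  have wedge: "wedge2 (map (\<lambda>i. \<Omega> i (\<pi> i)) xs) v = c ^ p * (\<Sum>\<sigma>\<in>?P. of_int (sign \<sigma>) * W xs \<pi> \<sigma>)"
    if "xs \<in> ?D" for xs \<pi>
    using that wedge2_antisymmetric[of "map (\<lambda>i. \<Omega> i (\<pi> i)) xs" c
        "\<lambda>a u w. \<Sum>b\<in>UNIV. B u (xs!a) b * B w b (\<pi> (xs!a))" v]
    by (simp add: \<Omega> W_def sum_subtractf)
  have "inv_poly_P p \<Omega> v = (1 / fact p) * (\<Sum>xs\<in>?D. \<Sum>\<pi>\<in>{\<pi>. \<pi> permutes set xs}.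
          of_int (sign \<pi>) * (c ^ p * (\<Sum>\<sigma>\<in>?P. of_int (sign \<sigma>) * W xs \<pi> \<sigma>)))"
    unfolding inv_poly_P_def by (intro arg_cong2[where f = "(*)"] refl sum.cong) (simp_all add: wedge)
  also have "\<dots> = (1 / fact p) * c ^ p * (\<Sum>xs\<in>?D. \<Sum>\<pi>\<in>{\<pi>. \<pi> permutes set xs}. \<Sum>\<sigma>\<in>?P.
          of_int (sign \<sigma>) * (of_int (sign \<pi>) * W xs \<pi> \<sigma>))"
    by (simp add: sum_distrib_left mult_ac)
  also have "(\<Sum>xs\<in>?D. \<Sum>\<pi>\<in>{\<pi>. \<pi> permutes set xs}. \<Sum>\<sigma>\<in>?P.
          of_int (sign \<sigma>) * (of_int (sign \<pi>) * W xs \<pi> \<sigma>))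
      = (\<Sum>\<sigma>\<in>?P. of_int (sign \<sigma>) * (\<Sum>xs\<in>?D. \<Sum>\<pi>\<in>{\<pi>. \<pi> permutes set xs}. of_int (sign \<pi>) * W xs \<pi> \<sigma>))"
    by (simp add: sum_distrib_left sum.swap[of _ ?P] cong: sum.cong)
  also have "\<dots> = 0"
    unfolding W_def by (rule sum_sign_matrix_products_eq_0[OF \<open>0 < p\<close>])
  finally show ?thesis by simp
qed

section \<open>Partial derivatives in coordinates\<close>

lemma has_real_derivative_pd:
  fixes f :: "real^'n::finite \<Rightarrow> real"
  assumes "f differentiable (at (y + t *\<^sub>R axis i 1))"
  shows "((\<lambda>s. f (y + s *\<^sub>R axis i 1)) has_real_derivative pd i f (y + t *\<^sub>R axis i 1)) (at t)"
proof -
  let ?e = "axis i (1::real) :: real^'n"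
  let ?z = "y + t *\<^sub>R ?e"
  obtain D where D: "(f has_derivative D) (at ?z)" using assms unfolding differentiable_def by blast
  have lin: "linear D" using D has_derivative_linear by blast
  have gen: "((\<lambda>s. f (w + s *\<^sub>R ?e)) has_real_derivative D ?e) (at s0)" if "w + s0 *\<^sub>R ?e = ?z" for w s0
  proof -
    have inner: "((\<lambda>s. w + s *\<^sub>R ?e) has_derivative (\<lambda>h. h *\<^sub>R ?e)) (at s0)"
      by (auto intro!: derivative_eq_intros)
    have "((\<lambda>s. f (w + s *\<^sub>R ?e)) has_derivative (\<lambda>h. D (h *\<^sub>R ?e))) (at s0)"
      using has_derivative_compose[OF inner] D that by simp
    then show ?thesis
      by (rule has_derivative_imp_has_field_derivative) (simp add: linear_cmul[OF lin])
  qed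
  have "pd i f ?z = D ?e"
    unfolding pd_def by (rule DERIV_imp_deriv) (rule gen, simp)
  then show ?thesis using gen[of y t] by simp
qed

lemma pd_cong_open:
  fixes f g :: "real^'n::finite \<Rightarrow> real"
  assumes U: "open U" "x \<in> U" and eq: "\<And>y. y \<in> U \<Longrightarrow> f y = g y"
  shows "pd i f x = pd i g x"
proof -
  obtain r where r: "r > 0" "ball x r \<subseteq> U" using U open_contains_ball by blast
  have "eventually (\<lambda>t. f (x + t *\<^sub>R axis i 1) = g (x + t *\<^sub>R axis i 1)) (nhds 0)"
    unfolding eventually_nhds_metric
  proof (intro exI conjI allI impI)
    show "r > 0" by fact
    fix t :: real assume "dist t 0 < r"
    then have "x + t *\<^sub>R axis i 1 \<in> ball x r" by (simp add: dist_norm)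
    then show "f (x + t *\<^sub>R axis i 1) = g (x + t *\<^sub>R axis i 1)" using r eq by auto
  qed
  then show ?thesis unfolding pd_def by (intro deriv_cong_ev) auto
qed

lemma dist_add_axes_le:
  fixes x :: "real^'n::finite"
  assumes "0 \<le> a" "0 \<le> b"
  shows "dist (x + a *\<^sub>R axis i 1 + b *\<^sub>R axis j 1) x \<le> a + b"
proof -
  have "dist (x + a *\<^sub>R axis i 1 + b *\<^sub>R axis j 1) x = norm (a *\<^sub>R axis i 1 + b *\<^sub>R (axis j 1 :: real^'n))"
    by (simp add: dist_norm add.assoc)
  also have "\<dots> \<le> a + b"
    using norm_triangle_ineq[of "a *\<^sub>R axis i 1" "b *\<^sub>R (axis j 1 :: real^'n)"] assms by simp
  finally show ?thesis .
qed

text \<open>Two applications of the mean value theorem express the second difference of \<open>f\<close>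
  as \<open>h\<^sup>2\<close> times the mixed partial \<open>\<partial>\<^sub>j \<partial>\<^sub>i f\<close> at a point near \<open>x\<close>.\<close>
lemma second_difference_eq_pd_pd:
  fixes f :: "real^'n::finite \<Rightarrow> real"
  assumes r: "ball x r \<subseteq> U" and h: "0 < h" "2 * h < r"
    and d0: "\<forall>y\<in>U. f differentiable (at y)"
    and di: "\<forall>y\<in>U. pd i f differentiable (at y)"
  shows "\<exists>y. dist y x < 2 * h \<and>
     f (x + h *\<^sub>R axis i 1 + h *\<^sub>R axis j 1) - f (x + h *\<^sub>R axis i 1) - f (x + h *\<^sub>R axis j 1) + f x
       = h * h * pd j (pd i f) y"
proof -
  let ?e = "axis i (1::real) :: real^'n"
  let ?d = "axis j (1::real) :: real^'n"
  have inU: "x + a *\<^sub>R ?e + b *\<^sub>R ?d \<in> U" if "0 \<le> a" "a \<le> h" "0 \<le> b" "b \<le> h" for a b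
    using dist_add_axes_le[of a b x i j] that h r by (auto simp: dist_commute)
  define \<phi>1 where "\<phi>1 t = f ((x + h *\<^sub>R ?d) + t *\<^sub>R ?e) - f (x + t *\<^sub>R ?e)" for t
  have der1: "(\<phi>1 has_real_derivative (pd i f ((x + h *\<^sub>R ?d) + t *\<^sub>R ?e) - pd i f (x + t *\<^sub>R ?e))) (at t)"
    if "0 \<le> t" "t \<le> h" for t
  proof -
    have a: "(x + h *\<^sub>R ?d) + t *\<^sub>R ?e \<in> U" using inU[of t h] that h by (simp add: ac_simps)
    have b: "x + t *\<^sub>R ?e \<in> U" using inU[of t 0] that h by simp
    show ?thesis unfolding \<phi>1_def
      by (intro DERIV_diff has_real_derivative_pd) (use a b d0 in auto)
  qed
  obtain \<xi> where \<xi>: "0 < \<xi>" "\<xi> < h" "\<phi>1 h - \<phi>1 0 = (h - 0) * (pd i f ((x + h *\<^sub>R ?d) + \<xi> *\<^sub>R ?e) - pd i f (x + \<xi> *\<^sub>R ?e))"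
    using MVT2[OF h(1), of \<phi>1 "\<lambda>t. pd i f ((x + h *\<^sub>R ?d) + t *\<^sub>R ?e) - pd i f (x + t *\<^sub>R ?e)"] der1 by blast
  define \<phi>2 where "\<phi>2 s = pd i f ((x + \<xi> *\<^sub>R ?e) + s *\<^sub>R ?d)" for s
  have der2: "(\<phi>2 has_real_derivative pd j (pd i f) ((x + \<xi> *\<^sub>R ?e) + s *\<^sub>R ?d)) (at s)"
    if "0 \<le> s" "s \<le> h" for s
  proof -
    have a: "(x + \<xi> *\<^sub>R ?e) + s *\<^sub>R ?d \<in> U" using inU[of \<xi> s] that \<xi> by simp
    show ?thesis unfolding \<phi>2_def by (intro has_real_derivative_pd) (use a di in auto)
  qed
  obtain \<eta> where \<eta>: "0 < \<eta>" "\<eta> < h" "\<phi>2 h - \<phi>2 0 = (h - 0) * pd j (pd i f) ((x + \<xi> *\<^sub>R ?e) + \<eta> *\<^sub>R ?d)"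
    using MVT2[OF h(1), of \<phi>2 "\<lambda>s. pd j (pd i f) ((x + \<xi> *\<^sub>R ?e) + s *\<^sub>R ?d)"] der2 by blast
  have e1: "\<phi>1 h - \<phi>1 0 = f (x + h *\<^sub>R ?e + h *\<^sub>R ?d) - f (x + h *\<^sub>R ?e) - f (x + h *\<^sub>R ?d) + f x"
    by (simp add: \<phi>1_def ac_simps)
  have e2: "pd i f ((x + h *\<^sub>R ?d) + \<xi> *\<^sub>R ?e) - pd i f (x + \<xi> *\<^sub>R ?e) = \<phi>2 h - \<phi>2 0"
    by (simp add: \<phi>2_def ac_simps)
  let ?y = "(x + \<xi> *\<^sub>R ?e) + \<eta> *\<^sub>R ?d"
  have dy: "dist ?y x < 2 * h"
    using dist_add_axes_le[of \<xi> \<eta> x i j] \<xi> \<eta> by simp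
  have "f (x + h *\<^sub>R ?e + h *\<^sub>R ?d) - f (x + h *\<^sub>R ?e) - f (x + h *\<^sub>R ?d) + f x = h * h * pd j (pd i f) ?y"
    using \<xi>(3) \<eta>(3) e1 e2 by simp
  then show ?thesis using dy by blast
qed

lemma pd_pd_commute:
  fixes f :: "real^'n::finite \<Rightarrow> real"
  assumes U: "open U" "x \<in> U"
    and d0: "\<forall>y\<in>U. f differentiable (at y)"
    and di: "\<forall>y\<in>U. pd i f differentiable (at y)"
    and dj: "\<forall>y\<in>U. pd j f differentiable (at y)"
    and ci: "isCont (pd j (pd i f)) x" and cj: "isCont (pd i (pd j f)) x"
  shows "pd j (pd i f) x = pd i (pd j f) x"
proof (rule ccontr)
  let ?A = "pd j (pd i f) x" and ?B = "pd i (pd j f) x"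
  assume ne: "?A \<noteq> ?B"
  define \<epsilon> where "\<epsilon> = \<bar>?A - ?B\<bar> / 2"
  have \<epsilon>: "\<epsilon> > 0" using ne by (simp add: \<epsilon>_def)
  obtain r where r: "r > 0" "ball x r \<subseteq> U" using U open_contains_ball by blast
  obtain d1 where d1: "d1 > 0" "\<And>y. dist y x < d1 \<Longrightarrow> dist (pd j (pd i f) y) ?A < \<epsilon>"
    using ci \<epsilon> unfolding continuous_at_eps_delta by blast
  obtain d2 where d2: "d2 > 0" "\<And>y. dist y x < d2 \<Longrightarrow> dist (pd i (pd j f) y) ?B < \<epsilon>"
    using cj \<epsilon> unfolding continuous_at_eps_delta by blast
  define h where "h = min r (min d1 d2) / 4"
  have h: "0 < h" "2 * h < r" "2 * h < d1" "2 * h < d2" using r d1 d2 by (auto simp: h_def)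
  obtain y1 where y1: "dist y1 x < 2 * h"
    "f (x + h *\<^sub>R axis i 1 + h *\<^sub>R axis j 1) - f (x + h *\<^sub>R axis i 1) - f (x + h *\<^sub>R axis j 1) + f x
       = h * h * pd j (pd i f) y1"
    using second_difference_eq_pd_pd[OF r(2) h(1,2) d0 di] by blast
  obtain y2 where y2: "dist y2 x < 2 * h"
    "f (x + h *\<^sub>R axis j 1 + h *\<^sub>R axis i 1) - f (x + h *\<^sub>R axis j 1) - f (x + h *\<^sub>R axis i 1) + f x
       = h * h * pd i (pd j f) y2"
    using second_difference_eq_pd_pd[OF r(2) h(1,2) d0 dj] by blast
  have "h * h * pd j (pd i f) y1 = h * h * pd i (pd j f) y2"
  proof -
    have c: "x + h *\<^sub>R axis j 1 + h *\<^sub>R axis i 1 = x + h *\<^sub>R axis i 1 + h *\<^sub>R (axis j 1 :: real^'n)"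
      by (simp add: algebra_simps)
    show ?thesis using y1(2) y2(2) unfolding c by linarith
  qed
  then have eq: "pd j (pd i f) y1 = pd i (pd j f) y2" using h(1) by simp
  have "dist (pd j (pd i f) y1) ?A < \<epsilon>" using d1(2) y1(1) h by simp
  moreover have "dist (pd i (pd j f) y2) ?B < \<epsilon>" using d2(2) y2(1) h by simp
  ultimately have "\<bar>?A - ?B\<bar> < 2 * \<epsilon>" using eq by (simp add: dist_real_def)
  then show False by (simp add: \<epsilon>_def)
qed

section \<open>Derivative of the inverse matrix\<close>

lemma matrix_inv_entries:
  fixes A :: "real^'n::finite^'n"
  assumes "invertible A"
  shows "(\<Sum>b\<in>UNIV. A $ a $ b * matrix_inv A $ b $ m) = (if a = m then 1 else 0)"
    and "(\<Sum>a\<in>UNIV. matrix_inv A $ i $ a * A $ a $ b) = (if i = b then 1 else 0)"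
proof -
  have "A ** matrix_inv A = mat 1" "matrix_inv A ** A = mat 1"
    using someI_ex[OF assms[unfolded invertible_def]] unfolding matrix_inv_def by auto
  then have "(A ** matrix_inv A) $ a $ m = mat 1 $ a $ m" "(matrix_inv A ** A) $ i $ b = mat 1 $ i $ b"
    by simp_all
  then show "(\<Sum>b\<in>UNIV. A $ a $ b * matrix_inv A $ b $ m) = (if a = m then 1 else 0)"
    and "(\<Sum>a\<in>UNIV. matrix_inv A $ i $ a * A $ a $ b) = (if i = b then 1 else 0)"
    by (simp_all add: matrix_matrix_mult_def mat_def)
qed

lemma matrix_inv_cramer:
  fixes A :: "real^'n::finite^'n"
  assumes "invertible A"
  shows "matrix_inv A $ k $ m = det (\<chi> a b. if b = k then axis m 1 $ a else A $ a $ b) / det A"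
proof -
  have "A *v (\<chi> k. matrix_inv A $ k $ m) = axis m 1"
    using matrix_inv_entries(1)[OF assms] by (simp add: matrix_vector_mult_def vec_eq_iff axis_def)
  then have "(\<chi> k. matrix_inv A $ k $ m) = (\<chi> k. det (\<chi> a b. if b = k then axis m 1 $ a else A $ a $ b) / det A)"
    using cramer[OF invertible_det_nz[THEN iffD1, OF assms]] by blast
  then show ?thesis
    by (metis (no_types, lifting) vec_lambda_beta)
qed

lemma matrix_inv_diff_entry:
  fixes A B :: "real^'n::finite^'n"
  assumes A: "invertible A" and B: "invertible B"
  shows "matrix_inv B $ i $ m - matrix_inv A $ i $ m
    = (\<Sum>a\<in>UNIV. \<Sum>b\<in>UNIV. matrix_inv B $ i $ a * (A $ a $ b - B $ a $ b) * matrix_inv A $ b $ m)"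
proof -
  let ?A' = "matrix_inv A" and ?B' = "matrix_inv B"
  have "(\<Sum>a\<in>UNIV. \<Sum>b\<in>UNIV. ?B' $ i $ a * (A $ a $ b - B $ a $ b) * ?A' $ b $ m)
      = (\<Sum>a\<in>UNIV. \<Sum>b\<in>UNIV. ?B' $ i $ a * (A $ a $ b * ?A' $ b $ m))
        - (\<Sum>a\<in>UNIV. \<Sum>b\<in>UNIV. ?B' $ i $ a * B $ a $ b * ?A' $ b $ m)"
    unfolding sum_subtractf[symmetric] by (intro sum.cong refl) (simp add: algebra_simps)
  also have "\<dots> = (\<Sum>a\<in>UNIV. ?B' $ i $ a * (\<Sum>b\<in>UNIV. A $ a $ b * ?A' $ b $ m))
        - (\<Sum>b\<in>UNIV. (\<Sum>a\<in>UNIV. ?B' $ i $ a * B $ a $ b) * ?A' $ b $ m)"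
    by (subst (2) sum.swap) (simp add: sum_distrib_left sum_distrib_right)
  also have "\<dots> = ?B' $ i $ m - ?A' $ i $ m"
    by (simp add: matrix_inv_entries[OF A] matrix_inv_entries[OF B] if_distrib[of "\<lambda>x. _ * x"]
        if_distrib[of "\<lambda>x. x * _"] cong: if_cong)
  finally show ?thesis ..
qed

lemma tendsto_det:
  fixes F :: "'b \<Rightarrow> real^'n::finite^'n"
  assumes "\<And>a b. ((\<lambda>t. F t $ a $ b) \<longlongrightarrow> F0 $ a $ b) net"
  shows "((\<lambda>t. det (F t)) \<longlongrightarrow> det F0) net"
  unfolding det_def by (intro tendsto_sum tendsto_mult tendsto_const tendsto_prod assms)

lemma eventually_invertible:
  fixes F :: "'b \<Rightarrow> real^'n::finite^'n"
  assumes "\<And>a b. ((\<lambda>t. F t $ a $ b) \<longlongrightarrow> F0 $ a $ b) net" and "invertible F0"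
  shows "eventually (\<lambda>t. invertible (F t)) net"
  using tendsto_imp_eventually_ne[OF tendsto_det[OF assms(1)]] assms(2)
  by (simp add: invertible_det_nz)

lemma tendsto_matrix_inv_entry:
  fixes F :: "'b \<Rightarrow> real^'n::finite^'n"
  assumes F: "\<And>a b. ((\<lambda>t. F t $ a $ b) \<longlongrightarrow> F0 $ a $ b) net" and F0: "invertible F0"
  shows "((\<lambda>t. matrix_inv (F t) $ k $ m) \<longlongrightarrow> matrix_inv F0 $ k $ m) net"
proof -
  let ?C = "\<lambda>A::real^'n^'n. (\<chi> a b. if b = k then axis m 1 $ a else A $ a $ b) :: real^'n^'n"
  have "((\<lambda>t. det (?C (F t)) / det (F t)) \<longlongrightarrow> det (?C F0) / det F0) net"
    using F0 invertible_det_nz by (intro tendsto_divide tendsto_det) (auto intro: F)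
  moreover have "eventually (\<lambda>t. det (?C (F t)) / det (F t) = matrix_inv (F t) $ k $ m) net"
    using eventually_invertible[OF F F0] by eventually_elim (simp add: matrix_inv_cramer)
  ultimately show ?thesis
    using Lim_transform_eventually by (fastforce simp: matrix_inv_cramer[OF F0])
qed

lemma has_real_derivative_matrix_inv_entry:
  fixes N :: "real \<Rightarrow> real^'n::finite^'n"
  assumes inv: "invertible (N x)"
    and N': "\<And>a b. ((\<lambda>t. N t $ a $ b) has_real_derivative N' a b) (at x)"
  shows "((\<lambda>t. matrix_inv (N t) $ i $ m) has_real_derivative
          - (\<Sum>a\<in>UNIV. \<Sum>b\<in>UNIV. matrix_inv (N x) $ i $ a * N' a b * matrix_inv (N x) $ b $ m)) (at x)"
proof -
  let ?H = "\<lambda>t. matrix_inv (N t)"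
  have N_cont: "((\<lambda>t. N t $ a $ b) \<longlongrightarrow> N x $ a $ b) (at x)" for a b
    using DERIV_isCont[OF N'[of a b]] by (simp add: isCont_def)
  have N_quot: "((\<lambda>t. (N t $ a $ b - N x $ a $ b) / (t - x)) \<longlongrightarrow> N' a b) (at x)" for a b
    using N'[of a b] unfolding has_field_derivative_iff .
  have "((\<lambda>t. \<Sum>a\<in>UNIV. \<Sum>b\<in>UNIV. ?H t $ i $ a * - ((N t $ a $ b - N x $ a $ b) / (t - x)) * ?H x $ b $ m)
      \<longlongrightarrow> (\<Sum>a\<in>UNIV. \<Sum>b\<in>UNIV. ?H x $ i $ a * - N' a b * ?H x $ b $ m)) (at x)"
    by (intro tendsto_intros tendsto_matrix_inv_entry[OF N_cont inv] N_quot)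
  moreover have "eventually (\<lambda>t. (\<Sum>a\<in>UNIV. \<Sum>b\<in>UNIV. ?H t $ i $ a * - ((N t $ a $ b - N x $ a $ b) / (t - x)) * ?H x $ b $ m)
      = (?H t $ i $ m - ?H x $ i $ m) / (t - x)) (at x)"
    using eventually_invertible[OF N_cont inv]
  proof eventually_elim
    case (elim t)
    have "(?H t $ i $ m - ?H x $ i $ m) / (t - x)
        = (\<Sum>a\<in>UNIV. \<Sum>b\<in>UNIV. ?H t $ i $ a * (N x $ a $ b - N t $ a $ b) * ?H x $ b $ m) / (t - x)"
      using matrix_inv_diff_entry[OF inv elim] by simp
    also have "\<dots> = (\<Sum>a\<in>UNIV. \<Sum>b\<in>UNIV. ?H t $ i $ a * - ((N t $ a $ b - N x $ a $ b) / (t - x)) * ?H x $ b $ m)"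
      unfolding sum_divide_distrib by (intro sum.cong refl) (simp add: algebra_simps diff_divide_distrib)
    finally show ?case ..
  qed
  ultimately have "((\<lambda>t. (?H t $ i $ m - ?H x $ i $ m) / (t - x))
      \<longlongrightarrow> (\<Sum>a\<in>UNIV. \<Sum>b\<in>UNIV. ?H x $ i $ a * - N' a b * ?H x $ b $ m)) (at x)"
    by (rule Lim_transform_eventually)
  then show ?thesis
    unfolding has_field_derivative_iff by (simp add: sum_negf)
qed

lemma invertible_if_pos_def:
  fixes M :: "real^'n::finite^'n"
  assumes "\<forall>v. v \<noteq> 0 \<longrightarrow> (\<Sum>i\<in>UNIV. \<Sum>j\<in>UNIV. M $ i $ j * v$i * v$j) > 0"
  shows "invertible M"
proof -
  have "v = 0" if "M *v v = 0" for v
  proof -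
    have "(\<Sum>i\<in>UNIV. \<Sum>j\<in>UNIV. M $ i $ j * v$i * v$j) = (\<Sum>i\<in>UNIV. v$i * (M *v v)$i)"
      by (simp add: matrix_vector_mult_def sum_distrib_left mult_ac)
    with that assms show "v = 0" by force
  qed
  then obtain B where "B ** M = mat 1"
    using matrix_left_invertible_ker by blast
  then show ?thesis
    using invertible_left_inverse by blast
qed

section \<open>Curvature of a Hessian metric\<close>

definition connection_form ::
    "('n::finite \<Rightarrow> 'n \<Rightarrow> real^'n \<Rightarrow> real) \<Rightarrow> real^'n \<Rightarrow> real^'n \<Rightarrow> 'n \<Rightarrow> 'n \<Rightarrow> real" where
  "connection_form g x u i j = (\<Sum>k\<in>UNIV. u$k * christoffel g i k j x)"

lemma curv_form_eq_neg_wedge: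
  assumes curv: "\<And>i j k l. curv g i j k l x =
    - (\<Sum>m\<in>UNIV. christoffel g i k m x * christoffel g m l j x - christoffel g i l m x * christoffel g m k j x)"
  shows "curv_form g x i j u w = - (\<Sum>b\<in>UNIV. connection_form g x u i b * connection_form g x w b j
                                    - connection_form g x w i b * connection_form g x u b j)"
proof -
  let ?\<Gamma> = "\<lambda>i k j. christoffel g i k j x"
  have "curv_form g x i j u w
      = - (\<Sum>b\<in>UNIV. \<Sum>k\<in>UNIV. \<Sum>l\<in>UNIV. u$k * w$l * (?\<Gamma> i k b * ?\<Gamma> b l j - ?\<Gamma> i l b * ?\<Gamma> b k j))"
  proof -
    have "curv_form g x i j u w
        = - (\<Sum>k\<in>UNIV. \<Sum>l\<in>UNIV. \<Sum>b\<in>UNIV. u$k * w$l * (?\<Gamma> i k b * ?\<Gamma> b l j - ?\<Gamma> i l b * ?\<Gamma> b k j))"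
      unfolding curv_form_def curv by (simp add: sum_distrib_left sum_negf mult_ac)
    also have "\<dots> = - (\<Sum>b\<in>UNIV. \<Sum>k\<in>UNIV. \<Sum>l\<in>UNIV. u$k * w$l * (?\<Gamma> i k b * ?\<Gamma> b l j - ?\<Gamma> i l b * ?\<Gamma> b k j))"
      by (subst sum.swap, subst (2) sum.swap) (rule refl)
    finally show ?thesis .
  qed
  also have "\<dots> = - (\<Sum>b\<in>UNIV. connection_form g x u i b * connection_form g x w b j
                          - connection_form g x w i b * connection_form g x u b j)"
  proof -
    have "connection_form g x u i b * connection_form g x w b j
        = (\<Sum>k\<in>UNIV. \<Sum>l\<in>UNIV. u$k * w$l * (?\<Gamma> i k b * ?\<Gamma> b l j))" for b
      unfolding connection_form_def sum_product by (intro sum.cong refl) (simp add: ac_simps)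
    moreover have "connection_form g x w i b * connection_form g x u b j
        = (\<Sum>k\<in>UNIV. \<Sum>l\<in>UNIV. u$k * w$l * (?\<Gamma> i l b * ?\<Gamma> b k j))" for b
      unfolding connection_form_def sum_product
      by (subst sum.swap) (intro sum.cong refl, simp add: ac_simps)
    ultimately show ?thesis
      by (simp add: sum_subtractf right_diff_distrib)
  qed
  finally show ?thesis .
qed

locale hessian_metric =
  fixes U :: "(real^'n::finite) set" and \<phi> :: "real^'n \<Rightarrow> real"
  assumes open_U: "open U" and smooth: "smooth_on U \<phi>" and pos_def: "pos_def_metric_on U (hessian \<phi>)"
begin

abbreviation \<Gamma> where "\<Gamma> \<equiv> christoffel (hessian \<phi>)"

abbreviation ginv where "ginv \<equiv> metric_inv (hessian \<phi>)"

definition third_deriv :: "'n \<Rightarrow> 'n \<Rightarrow> 'n \<Rightarrow> real^'n \<Rightarrow> real" where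
  "third_deriv a b c = pd a (hessian \<phi> b c)"

lemma third_deriv_eq_pds: "third_deriv a b c = pds [a, b, c] \<phi>"
  by (simp add: third_deriv_def hessian_def fun_eq_iff)

lemma differentiable_pds: "y \<in> U \<Longrightarrow> pds is \<phi> differentiable (at y)"
  using smooth open_U unfolding smooth_on_def by (simp add: differentiable_on_eq_differentiable_at)

lemma pd_pd_pds_commute:
  assumes "y \<in> U"
  shows "pd j (pd i (pds is \<phi>)) y = pd i (pd j (pds is \<phi>)) y"
proof (rule pd_pd_commute[OF open_U assms])
  show "\<forall>y\<in>U. pds is \<phi> differentiable (at y)"
    and "\<forall>y\<in>U. pd i (pds is \<phi>) differentiable (at y)"
    and "\<forall>y\<in>U. pd j (pds is \<phi>) differentiable (at y)"
    using differentiable_pds[of _ "i # is"] differentiable_pds[of _ "j # is"] differentiable_pds by auto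
  show "isCont (pd j (pd i (pds is \<phi>))) y" and "isCont (pd i (pd j (pds is \<phi>))) y"
    using differentiable_pds[OF assms, of "j # i # is"] differentiable_pds[OF assms, of "i # j # is"]
    by (simp_all add: differentiable_imp_continuous_within)
qed

lemma hessian_symmetric: "y \<in> U \<Longrightarrow> hessian \<phi> b c y = hessian \<phi> c b y"
  using pos_def unfolding pos_def_metric_on_def by blast

lemma third_deriv_swap12: "y \<in> U \<Longrightarrow> third_deriv a b c y = third_deriv b a c y"
  using pd_pd_pds_commute[of y b a "[c]"] by (simp add: third_deriv_def hessian_def)

lemma third_deriv_swap23: "y \<in> U \<Longrightarrow> third_deriv a b c y = third_deriv a c b y"
  unfolding third_deriv_def by (rule pd_cong_open[OF open_U]) (auto intro: hessian_symmetric)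

lemma third_deriv_swap13: "y \<in> U \<Longrightarrow> third_deriv a b c y = third_deriv c b a y"
  using third_deriv_swap12 third_deriv_swap23 by metis

lemma christoffel_hessian:
  assumes "y \<in> U"
  shows "\<Gamma> k i j y = (1/2) * (\<Sum>l\<in>UNIV. ginv y k l * third_deriv i j l y)"
proof -
  have "pd i (hessian \<phi> j l) y + pd j (hessian \<phi> i l) y - pd l (hessian \<phi> i j) y = third_deriv i j l y" for l
    using third_deriv_swap12[OF assms, of j i l] third_deriv_swap13[OF assms, of l i j]
    by (simp add: third_deriv_def)
  then show ?thesis by (simp add: christoffel_def)
qed

lemma invertible_hessian: "y \<in> U \<Longrightarrow> invertible (\<chi> a b. hessian \<phi> a b y)"
  using pos_def unfolding pos_def_metric_on_def by (intro invertible_if_pos_def) auto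

lemma has_real_derivative_metric_inv:
  assumes "x \<in> U"
  shows "((\<lambda>t. ginv (x + t *\<^sub>R axis k 1) i m) has_real_derivative
      - (\<Sum>a\<in>UNIV. \<Sum>b\<in>UNIV. ginv x i a * third_deriv k a b x * ginv x b m)) (at 0)"
proof -
  have "((\<lambda>t. hessian \<phi> a b (x + t *\<^sub>R axis k 1)) has_real_derivative third_deriv k a b x) (at 0)" for a b
    using has_real_derivative_pd[of "hessian \<phi> a b" x 0 k] differentiable_pds[OF assms, of "[a, b]"]
    by (simp add: hessian_def third_deriv_def)
  then show ?thesis
    using has_real_derivative_matrix_inv_entry[of "\<lambda>t. \<chi> a b. hessian \<phi> a b (x + t *\<^sub>R axis k 1)" 0]
      invertible_hessian[OF assms]
    by (simp add: metric_inv_def)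
qed

lemma sum_ginv_third_deriv_eq_christoffel_product:
  assumes x: "x \<in> U"
  shows "(\<Sum>m\<in>UNIV. (\<Sum>a\<in>UNIV. \<Sum>b\<in>UNIV. ginv x i a * third_deriv k a b x * ginv x b m) * third_deriv l j m x)
       = 4 * (\<Sum>b\<in>UNIV. \<Gamma> i k b x * \<Gamma> b l j x)"
proof -
  have \<Gamma>_ik: "(\<Sum>a\<in>UNIV. ginv x i a * third_deriv k a b x) = 2 * \<Gamma> i k b x" for b
    using third_deriv_swap23[OF x, of k _ b] by (simp add: christoffel_hessian[OF x])
  have \<Gamma>_lj: "(\<Sum>m\<in>UNIV. ginv x b m * third_deriv l j m x) = 2 * \<Gamma> b l j x" for b
    by (simp add: christoffel_hessian[OF x])
  have "(\<Sum>m\<in>UNIV. (\<Sum>a\<in>UNIV. \<Sum>b\<in>UNIV. ginv x i a * third_deriv k a b x * ginv x b m) * third_deriv l j m x)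
      = (\<Sum>m\<in>UNIV. \<Sum>a\<in>UNIV. \<Sum>b\<in>UNIV. (ginv x i a * third_deriv k a b x) * (ginv x b m * third_deriv l j m x))"
    unfolding sum_distrib_right by (simp add: mult_ac)
  also have "\<dots> = (\<Sum>b\<in>UNIV. \<Sum>a\<in>UNIV. \<Sum>m\<in>UNIV. (ginv x i a * third_deriv k a b x) * (ginv x b m * third_deriv l j m x))"
    by (subst sum.swap, subst (2) sum.swap, subst sum.swap) (rule refl)
  also have "\<dots> = (\<Sum>b\<in>UNIV. (\<Sum>a\<in>UNIV. ginv x i a * third_deriv k a b x) * (\<Sum>m\<in>UNIV. ginv x b m * third_deriv l j m x))"
    by (simp add: sum_product)
  finally show ?thesis
    by (simp add: \<Gamma>_ik \<Gamma>_lj sum_distrib_left)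
qed

lemma pd_christoffel_hessian:
  assumes x: "x \<in> U"
  shows "pd k (\<Gamma> i l j) x
    = - 2 * (\<Sum>b\<in>UNIV. \<Gamma> i k b x * \<Gamma> b l j x) + (1/2) * (\<Sum>m\<in>UNIV. ginv x i m * pd k (third_deriv l j m) x)"
proof -
  let ?line = "\<lambda>t. x + t *\<^sub>R axis k 1"
  have third_deriv_line:
    "((\<lambda>t. third_deriv l j m (?line t)) has_real_derivative pd k (third_deriv l j m) x) (at 0)" for m
    using has_real_derivative_pd[of "third_deriv l j m" x 0 k] differentiable_pds[OF x, of "[l, j, m]"]
    by (simp add: third_deriv_eq_pds)
  have "((\<lambda>t. ginv (?line t) i m * third_deriv l j m (?line t)) has_real_derivative
      - (\<Sum>a\<in>UNIV. \<Sum>b\<in>UNIV. ginv x i a * third_deriv k a b x * ginv x b m) * third_deriv l j m x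
      + ginv x i m * pd k (third_deriv l j m) x) (at 0)" for m
    using DERIV_mult[OF has_real_derivative_metric_inv[OF x] third_deriv_line] by (simp add: mult.commute)
  then have "((\<lambda>t. (1/2) * (\<Sum>m\<in>UNIV. ginv (?line t) i m * third_deriv l j m (?line t))) has_real_derivative
      (1/2) * (\<Sum>m\<in>UNIV. - (\<Sum>a\<in>UNIV. \<Sum>b\<in>UNIV. ginv x i a * third_deriv k a b x * ginv x b m) * third_deriv l j m x
                        + ginv x i m * pd k (third_deriv l j m) x)) (at 0)"
    by (intro DERIV_cmult DERIV_sum)
  then have "pd k (\<lambda>y. (1/2) * (\<Sum>m\<in>UNIV. ginv y i m * third_deriv l j m y)) x
      = (1/2) * (\<Sum>m\<in>UNIV. - (\<Sum>a\<in>UNIV. \<Sum>b\<in>UNIV. ginv x i a * third_deriv k a b x * ginv x b m) * third_deriv l j m x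
                        + ginv x i m * pd k (third_deriv l j m) x)"
    unfolding pd_def by (rule DERIV_imp_deriv)
  moreover have "pd k (\<Gamma> i l j) x = pd k (\<lambda>y. (1/2) * (\<Sum>m\<in>UNIV. ginv y i m * third_deriv l j m y)) x"
    by (rule pd_cong_open[OF open_U x]) (rule christoffel_hessian)
  ultimately show ?thesis
    by (simp add: sum.distrib sum_subtractf sum_ginv_third_deriv_eq_christoffel_product[OF x])
qed

text \<open>The terms with fourth derivatives of \<open>\<phi>\<close> cancel by symmetry of mixed partials, so
  the curvature of a Hessian metric is quadratic in its Christoffel symbols.\<close>
lemma curv_hessian:
  assumes x: "x \<in> U"
  shows "curv (hessian \<phi>) i j k l x = - (\<Sum>m\<in>UNIV. \<Gamma> i k m x * \<Gamma> m l j x - \<Gamma> i l m x * \<Gamma> m k j x)"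
proof -
  have "pd k (third_deriv l j m) x = pd l (third_deriv k j m) x" for m
    using pd_pd_pds_commute[OF x, of l k "[j, m]"] by (simp add: third_deriv_eq_pds)
  then show ?thesis
    unfolding curv_def pd_christoffel_hessian[OF x] by (simp add: sum_subtractf algebra_simps)
qed

end

theorem mainTheorem4:
  fixes U :: "(real^'n::finite) set" and \<phi> :: "real^'n \<Rightarrow> real"
  assumes "open U"
    and "smooth_on U \<phi>"
    and "pos_def_metric_on U (hessian \<phi>)"
  shows "\<forall>k\<ge>1. \<forall>x\<in>U. \<forall>v. pontryagin_form (hessian \<phi>) k x v = 0"
proof (intro allI impI ballI)
  fix k :: nat and x v
  assume "k \<ge> 1" and "x \<in> U"
  interpret hessian_metric U \<phi>
    using assms by unfold_locales
  show "pontryagin_form (hessian \<phi>) k x v = 0"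
    unfolding pontryagin_form_def
  proof (rule inv_poly_P_square_eq_0[where c = "-1" and B = "connection_form (hessian \<phi>) x"])
    show "curv_form (hessian \<phi>) x i j u w = -1 * (\<Sum>b\<in>UNIV.
        connection_form (hessian \<phi>) x u i b * connection_form (hessian \<phi>) x w b j
      - connection_form (hessian \<phi>) x w i b * connection_form (hessian \<phi>) x u b j)" for i j u w
      using curv_form_eq_neg_wedge[OF curv_hessian[OF \<open>x \<in> U\<close>]] by simp
  qed (use \<open>k \<ge> 1\<close> in simp)
qed

end
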